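(* Let $k \geq 2$, $n \geq 2$ and $\lambda \geq 1$ be integers. Suppose $A$ is an $\mathrm{OA}_{\lambda}(k,n)$ on a symbol set containing the symbol $1$, and suppose that the row $(1,1,\dots,1)$ is repeated $m$ times in $A$ (i.e., $m$ of the rows of $A$ equal $(1,1,\dots,1)$), where \[m = \frac{\lambda n^2}{k(n-1)+1}.\] Then every other row of $A$ (each of the remaining $\lambda n^2 - m$ rows) contains exactly \[\overline{a} = \frac{k(\lambda n - m)}{\lambda n^2-m}\] occurrences of the symbol $1$.
   Context: An orthogonal array $\mathrm{OA}_{\lambda}(k,n)$ (of strength two) is a $\lambda n^2$ by $k$ array $A$ with entries from a set $X$ of cardinality $n$ such that, within any two columns of $A$, every ordered pair of symbols from $X$ occurs in exactly $\lambda$ rows of $A$. *)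

theory Defs
  imports Complex_Main
begin

definition orthogonal_array ::
  "nat \<Rightarrow> nat \<Rightarrow> nat \<Rightarrow> 'a set \<Rightarrow> (nat \<Rightarrow> nat \<Rightarrow> 'a) \<Rightarrow> bool" where
  "orthogonal_array lam k n X A \<longleftrightarrow>
     finite X \<and> card X = n \<and>
     (\<forall>r < lam * n^2. \<forall>c < k. A r c \<in> X) \<and>
     (\<forall>c1 < k. \<forall>c2 < k. c1 \<noteq> c2 \<longrightarrow>
        (\<forall>x \<in> X. \<forall>y \<in> X.
           card {r. r < lam * n^2 \<and> A r c1 = x \<and> A r c2 = y} = lam))"

end

theory Submission
  imports Defs
begin

text \<open>Let \<open>a\<^sub>r\<close> be the number of ones in row \<open>r\<close>. Counting incidences and
  ordered pairs of ones via the defining property of the array gives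
  \<open>\<Sum>a\<^sub>r = k\<lambda>n\<close> and \<open>\<Sum>a\<^sub>r\<^sup>2 = k\<lambda>n + k(k-1)\<lambda>\<close>. Removing the \<open>m\<close> all-ones rows,
  the remaining \<open>t = \<lambda>n\<^sup>2 - m\<close> rows have first and second moments for which the
  hypothesis on \<open>m\<close> turns the Cauchy-Schwarz inequality
  \<open>(\<Sum>a\<^sub>r)\<^sup>2 \<le> t \<Sum>a\<^sub>r\<^sup>2\<close> into an equality, so the \<open>a\<^sub>r\<close> are all equal to their mean.\<close>

definition symbol_count :: "nat \<Rightarrow> (nat \<Rightarrow> nat \<Rightarrow> 'a) \<Rightarrow> 'a \<Rightarrow> nat \<Rightarrow> nat" where
  "symbol_count k A x r = card {c. c < k \<and> A r c = x}"

lemma card_less_eq_sum_of_bool: "card {i. i < N \<and> P i} = (\<Sum>i<N::nat. of_bool (P i))"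
  by (subst sum_of_bool_eq) (auto simp: lessThan_def Collect_conj_eq)

lemma orthogonal_arrayD:
  assumes "orthogonal_array lam k n X A"
  shows "finite X" and "card X = n" and "\<And>r c. r < lam * n^2 \<Longrightarrow> c < k \<Longrightarrow> A r c \<in> X"
    and "\<And>c1 c2 x y. c1 < k \<Longrightarrow> c2 < k \<Longrightarrow> c1 \<noteq> c2 \<Longrightarrow> x \<in> X \<Longrightarrow> y \<in> X \<Longrightarrow>
           card {r. r < lam * n^2 \<and> A r c1 = x \<and> A r c2 = y} = lam"
  using assms by (auto simp: orthogonal_array_def)

lemma orthogonal_array_column_count:
  assumes OA: "orthogonal_array lam k n X A" and "2 \<le> k" and "c < k" and "x \<in> X"
  shows "card {r. r < lam * n^2 \<and> A r c = x} = lam * n"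
proof -
  define c' where "c' = (if c = 0 then 1 else 0::nat)"
  have c': "c' < k" "c \<noteq> c'" using assms(2,3) by (auto simp: c'_def)
  have "{r. r < lam * n^2 \<and> A r c = x} = (\<Union>y\<in>X. {r. r < lam * n^2 \<and> A r c = x \<and> A r c' = y})"
    using orthogonal_arrayD(3)[OF OA _ c'(1)] by blast
  also have "card \<dots> = (\<Sum>y\<in>X. card {r. r < lam * n^2 \<and> A r c = x \<and> A r c' = y})"
    using orthogonal_arrayD(1)[OF OA] by (intro card_UN_disjoint) auto
  also have "\<dots> = (\<Sum>y\<in>X. lam)"
    using orthogonal_arrayD(4)[OF OA assms(3) c' assms(4)] by simp
  finally show ?thesis
    using orthogonal_arrayD(2)[OF OA] by simp
qed

lemma orthogonal_array_sum_symbol_count: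
  assumes "orthogonal_array lam k n X A" and "2 \<le> k" and "x \<in> X"
  shows "(\<Sum>r < lam * n^2. symbol_count k A x r) = k * (lam * n)"
proof -
  have "(\<Sum>r < lam * n^2. symbol_count k A x r) = (\<Sum>r < lam * n^2. \<Sum>c<k. of_bool (A r c = x))"
    by (simp only: symbol_count_def card_less_eq_sum_of_bool)
  also have "\<dots> = (\<Sum>c<k. \<Sum>r < lam * n^2. of_bool (A r c = x))"
    by (rule sum.swap)
  also have "\<dots> = (\<Sum>c<k. lam * n)"
    using orthogonal_array_column_count[OF assms(1,2) _ assms(3)]
    by (intro sum.cong) (simp_all flip: card_less_eq_sum_of_bool)
  finally show ?thesis by simp
qed

lemma orthogonal_array_sum_symbol_count_squared:
  assumes "orthogonal_array lam k n X A" and "2 \<le> k" and "x \<in> X"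
  shows "(\<Sum>r < lam * n^2. (symbol_count k A x r)^2) = k * (lam * n) + k * (k - 1) * lam"
proof -
  have pairs: "(\<Sum>r < lam * n^2. of_bool (A r c1 = x \<and> A r c2 = x)) = (if c1 = c2 then lam * n else lam)"
    if "c1 < k" "c2 < k" for c1 c2
    using orthogonal_array_column_count[OF assms(1,2) that(1) assms(3)]
      orthogonal_arrayD(4)[OF assms(1) that _ assms(3,3)]
    by (cases "c1 = c2") (simp_all flip: card_less_eq_sum_of_bool)
  have "(\<Sum>r < lam * n^2. (symbol_count k A x r)^2)
      = (\<Sum>r < lam * n^2. \<Sum>c1<k. \<Sum>c2<k. of_bool (A r c1 = x \<and> A r c2 = x))"
    by (simp only: symbol_count_def card_less_eq_sum_of_bool power2_eq_square sum_product of_bool_conj)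
  also have "\<dots> = (\<Sum>c1<k. \<Sum>r < lam * n^2. \<Sum>c2<k. of_bool (A r c1 = x \<and> A r c2 = x))"
    by (rule sum.swap)
  also have "\<dots> = (\<Sum>c1<k. \<Sum>c2<k. \<Sum>r < lam * n^2. of_bool (A r c1 = x \<and> A r c2 = x))"
    by (simp only: sum.swap[of _ "{..<lam * n^2}"])
  also have "\<dots> = (\<Sum>c1<k. lam * n + (k - 1) * lam)"
  proof (intro sum.cong refl)
    fix c1 assume "c1 \<in> {..<k}"
    then have "(\<Sum>c2<k. if c1 = c2 then lam * n else lam) = lam * n + (\<Sum>c2\<in>{..<k} - {c1}. lam)"
      by (simp add: sum.remove[of "{..<k}" c1])
    also have "\<dots> = lam * n + (k - 1) * lam"
      using \<open>c1 \<in> {..<k}\<close> by simp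
    finally show "(\<Sum>c2<k. \<Sum>r < lam * n^2. of_bool (A r c1 = x \<and> A r c2 = x)) = lam * n + (k - 1) * lam"
      using \<open>c1 \<in> {..<k}\<close> pairs by simp
  qed
  finally show ?thesis by (simp add: algebra_simps)
qed

lemma eq_average_if_card_mult_sum_squares_eq:
  fixes f :: "'a \<Rightarrow> real"
  assumes "finite T" and "card T * (\<Sum>y\<in>T. (f y)^2) = (\<Sum>y\<in>T. f y)^2" and "x \<in> T"
  shows "f x = (\<Sum>y\<in>T. f y) / card T"
proof -
  define t where "t = real (card T)"
  define \<mu> where "\<mu> = (\<Sum>y\<in>T. f y) / t"
  have "t > 0" using assms(1,3) by (auto simp: t_def card_gt_0_iff)
  have "(\<Sum>y\<in>T. (f y - \<mu>)^2) = (\<Sum>y\<in>T. (f y)^2) - 2 * \<mu> * (\<Sum>y\<in>T. f y) + t * \<mu>^2"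
    by (simp add: t_def power2_diff sum.distrib sum_subtractf sum_distrib_left sum_distrib_right algebra_simps)
  also have "\<dots> = 0"
    using assms(2) \<open>t > 0\<close> by (simp add: \<mu>_def t_def field_simps power2_eq_square)
  finally have "(f x - \<mu>)^2 = 0"
    using assms(1,3) by (simp add: sum_nonneg_eq_0_iff)
  then show ?thesis by (simp add: \<mu>_def t_def)
qed

lemma orthogonal_array_nonconstant_rows_sums:
  assumes OA: "orthogonal_array lam k n X A" and "2 \<le> k" and "x \<in> X"
  defines "C \<equiv> {r. r < lam * n^2 \<and> (\<forall>c < k. A r c = x)}"
    and "T \<equiv> {r. r < lam * n^2 \<and> \<not> (\<forall>c < k. A r c = x)}"
  shows "card T + card C = lam * n^2"
    and "(\<Sum>r\<in>T. symbol_count k A x r) + k * card C = k * (lam * n)"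
    and "(\<Sum>r\<in>T. (symbol_count k A x r)^2) + k^2 * card C = k * (lam * n) + k * (k - 1) * lam"
proof -
  have rows: "{..<lam * n^2} = T \<union> C" and disj: "T \<inter> C = {}"
    by (auto simp: T_def C_def)
  have fin: "finite T" "finite C"
    by (auto simp: T_def C_def)
  have const: "symbol_count k A x r = k" if "r \<in> C" for r
  proof -
    have "{c. c < k \<and> A r c = x} = {..<k}"
      using that by (auto simp: C_def)
    then show ?thesis by (simp add: symbol_count_def)
  qed
  have split: "(\<Sum>r < lam * n^2. f r) = (\<Sum>r\<in>T. f r) + (\<Sum>r\<in>C. f r)" for f :: "nat \<Rightarrow> nat"
    unfolding rows using fin disj by (rule sum.union_disjoint)
  show "card T + card C = lam * n^2"
    using card_Un_disjoint[OF fin disj] by (simp flip: rows)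
  show "(\<Sum>r\<in>T. symbol_count k A x r) + k * card C = k * (lam * n)"
    using orthogonal_array_sum_symbol_count[OF OA assms(2,3)] split[of "symbol_count k A x"] const
    by (simp add: mult.commute)
  show "(\<Sum>r\<in>T. (symbol_count k A x r)^2) + k^2 * card C = k * (lam * n) + k * (k - 1) * lam"
    using orthogonal_array_sum_symbol_count_squared[OF OA assms(2,3)]
      split[of "\<lambda>r. (symbol_count k A x r)^2"] const
    by (simp add: mult.commute)
qed

theorem corollary4:
  fixes lam k n m :: nat and X :: "'a set" and A :: "nat \<Rightarrow> nat \<Rightarrow> 'a" and one :: 'a
  assumes "k \<ge> 2" and "n \<ge> 2" and "lam \<ge> 1"
    and "orthogonal_array lam k n X A"
    and "one \<in> X"
    and "m = card {r. r < lam * n^2 \<and> (\<forall>c < k. A r c = one)}"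
    and "real m = real (lam * n^2) / real (k * (n - 1) + 1)"
  shows "\<forall>r < lam * n^2. \<not> (\<forall>c < k. A r c = one) \<longrightarrow>
           real (card {c. c < k \<and> A r c = one})
             = real k * (real lam * real n - real m) / (real lam * real n^2 - real m)"
proof (intro allI impI)
  fix r assume "r < lam * n^2" and "\<not> (\<forall>c < k. A r c = one)"
  define T where "T = {r. r < lam * n^2 \<and> \<not> (\<forall>c < k. A r c = one)}"
  define a where "a r = real (symbol_count k A one r)" for r
  note sums = orthogonal_array_nonconstant_rows_sums[OF assms(4,1,5), folded assms(6) T_def]
  have "real m * real (k * (n - 1) + 1) = real (lam * n^2)"
    unfolding assms(7) by (simp del: of_nat_add of_nat_mult)
  then have m: "real lam * real n^2 = real m * (real k * (real n - 1) + 1)"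
    using assms(2) by (simp add: of_nat_diff add.commute)
  have card_T: "real (card T) = real lam * real n^2 - real m"
    using arg_cong[OF sums(1), of real] by simp
  have sum_T: "(\<Sum>r\<in>T. a r) = real k * (real lam * real n - real m)"
    using arg_cong[OF sums(2), of real] by (simp add: a_def algebra_simps)
  have sum_sq_T: "(\<Sum>r\<in>T. (a r)^2)
      = real k * real lam * real n + real k * (real k - 1) * real lam - real m * real k^2"
  proof -
    have "real (k - 1) = real k - 1"
      using assms(1) by simp
    then show ?thesis
      using arg_cong[OF sums(3), of real]
      by (simp only: a_def of_nat_add of_nat_mult of_nat_power of_nat_sum) (simp add: algebra_simps)
  qed
  have "card T * (\<Sum>r\<in>T. (a r)^2) = (\<Sum>r\<in>T. a r)^2"
    unfolding card_T sum_T sum_sq_T using m by algebra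
  moreover have "finite T"
    by (simp add: T_def)
  moreover have "r \<in> T"
    using \<open>r < lam * n^2\<close> \<open>\<not> (\<forall>c < k. A r c = one)\<close> by (simp add: T_def)
  ultimately have "a r = (\<Sum>r\<in>T. a r) / card T"
    by (intro eq_average_if_card_mult_sum_squares_eq)
  then have "a r = real k * (real lam * real n - real m) / (real lam * real n^2 - real m)"
    unfolding sum_T card_T .
  then show "real (card {c. c < k \<and> A r c = one})
             = real k * (real lam * real n - real m) / (real lam * real n^2 - real m)"
    by (simp add: a_def symbol_count_def)
qed

end
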